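(* Let $\mathcal{R}$ be a left-linear TRS, $\mathcal{R}_1,\mathcal{R}_2,\mathcal{C}\subseteq\mathcal{R}$, and $\mathcal{P}=\mathsf{PCPS}(\mathcal{R},\mathcal{C})$. Suppose every parallel critical pair $(t,u)$ between $\mathcal{R}$ and $\mathcal{R}$ satisfies $t\to_\mathcal{R}^*\cdot{}_\mathcal{R}\!\!\leftarrow^* u$. If $t\;{}_{\mathcal{R}_1}\!\Leftarrow s\Rightarrow_{\mathcal{R}_2}u$, then (i) $t\Rightarrow_{\mathcal{R}_2}\cdot\leftrightarrow^*_\mathcal{C}\cdot{}_{\mathcal{R}_1}\!\Leftarrow u$, or (ii) there exist $t',u'$ with $t\;{}_{\mathcal{R}_1}\!\Leftarrow t'\;{}_\mathcal{P}\!\!\leftarrow s\to_\mathcal{P} u'\Rightarrow_{\mathcal{R}_2}u$ and $t'\to_\mathcal{R}^*\cdot{}_\mathcal{R}\!\!\leftarrow^*u'$.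
   Context: A TRS is a set of rules $\ell\to r$ ($\ell\notin\mathcal{V}$, $\mathcal{V}ar(r)\subseteq\mathcal{V}ar(\ell)$); left-linear: no variable repeated in a left-hand side. Parallel step: $s\Rightarrow_\mathcal{R}t$ iff for some set $P$ of pairwise parallel positions of $s$ (no one a prefix of another), for each $p\in P$ there are $\ell\to r\in\mathcal{R}$, $\mu$ with $s|_p=\ell\mu$, $t|_p=r\mu$, and $t=s[t|_p]_{p\in P}$; $\Leftarrow$ is its inverse. $\leftrightarrow^*_\mathcal{C}$ is the conversion relation of $\mathcal{C}$. Parallel critical peak between $\mathcal{R}$ and $\mathcal{S}$: for a variant $\ell\to r$ of an $\mathcal{S}$-rule, a non-empty set $P$ of pairwise parallel function-symbol positions of $\ell$, variants $\ell_p\to r_p$ ($p\in P$) of $\mathcal{R}$-rules, all pairwise variable-disjoint, $\sigma$ a most general unifier of $\{\ell_p\approx\ell|_p\}_{p\in P}$, and $\ell_\epsilon\to r_\epsilon$ not a variant of $\ell\to r$ if $P=\{\epsilon\}$ (root): the peak $t\;{}_\mathcal{R}\!\Leftarrow s\xrightarrow{\epsilon}_\mathcal{S}u$ with $s=\ell\sigma$, $t=(\ell\sigma)[r_p\sigma]_{p\in P}$, $u=r\sigma$; $(t,u)$ is a parallel critical pair. $\mathsf{PCPS}(\mathcal{R},\mathcal{C})$ is the TRS $\{s\to t,\ s\to u\mid t\;{}_\mathcal{R}\!\Leftarrow s\xrightarrow{\epsilon}_\mathcal{R}u$ is a parallel critical peak between $\mathcal{R}$ and $\mathcal{R}$ and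 $t\leftrightarrow^*_\mathcal{C}u$ does not hold$\}$. *)

theory Defs
  imports Main
begin

datatype ('f, 'v) "term" = Var 'v | Fun 'f "('f, 'v) term list"

type_synonym ('f, 'v) rule = "('f, 'v) term \<times> ('f, 'v) term"
type_synonym ('f, 'v) trs = "('f, 'v) rule set"
type_synonym pos = "nat list"

fun vars :: "('f, 'v) term \<Rightarrow> 'v set" where
  "vars (Var x) = {x}"
| "vars (Fun f ts) = (\<Union>t \<in> set ts. vars t)"

definition vars_rule :: "('f, 'v) rule \<Rightarrow> 'v set" where
  "vars_rule lr = vars (fst lr) \<union> vars (snd lr)"

fun subst_apply :: "('f, 'v) term \<Rightarrow> ('v \<Rightarrow> ('f, 'v) term) \<Rightarrow> ('f, 'v) term" (infixl "\<cdot>" 67) where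
  "Var x \<cdot> \<sigma> = \<sigma> x"
| "Fun f ts \<cdot> \<sigma> = Fun f (map (\<lambda>t. t \<cdot> \<sigma>) ts)"

lemma size_zip_term_simp [termination_simp]:
  "(a, b) \<in> set (zip xs ts) \<Longrightarrow> size b < Suc (size_list size ts)"
  by (meson less_Suc_eq_le set_zip_rightD size_list_estimation' order_refl)

lemma size_nth_term_simp [termination_simp]:
  "i < length ts \<Longrightarrow> size (ts ! i) < Suc (size_list size ts)"
  by (meson less_Suc_eq_le nth_mem size_list_estimation' order_refl)

fun poss :: "('f, 'v) term \<Rightarrow> pos set" where
  "poss (Var x) = {[]}"
| "poss (Fun f ts) = insert [] (\<Union>(i, t) \<in> set (zip [0..<length ts] ts). (Cons i) ` poss t)"

text \<open>Subterm at a position (meaningful for positions in poss).\<close>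
fun subt_at :: "('f, 'v) term \<Rightarrow> pos \<Rightarrow> ('f, 'v) term" (infixl "|'_" 67) where
  "subt_at t [] = t"
| "subt_at (Var x) (i # p) = Var x"
| "subt_at (Fun f ts) (i # p) = (if i < length ts then subt_at (ts ! i) p else Fun f ts)"

fun replace_at :: "('f, 'v) term \<Rightarrow> pos \<Rightarrow> ('f, 'v) term \<Rightarrow> ('f, 'v) term" where
  "replace_at s [] u = u"
| "replace_at (Var x) (i # p) u = Var x"
| "replace_at (Fun f ts) (i # p) u =
     (if i < length ts then Fun f (ts[i := replace_at (ts ! i) p u]) else Fun f ts)"

text \<open>Simultaneous replacement \<open>s[u_p]_{p \<in> P}\<close> at pairwise parallel positions,
  given by a list of (position, term) pairs (order irrelevant for parallel positions).\<close>
definition replace_all :: "('f, 'v) term \<Rightarrow> (pos \<times> ('f, 'v) term) list \<Rightarrow> ('f, 'v) term" where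
  "replace_all s pus = foldr (\<lambda>(p, u) t. replace_at t p u) pus s"

definition fun_poss :: "('f, 'v) term \<Rightarrow> pos set" where
  "fun_poss t = {p \<in> poss t. \<not> (\<exists>x. t |_ p = Var x)}"

definition parallel_pos :: "pos \<Rightarrow> pos \<Rightarrow> bool" where
  "parallel_pos p q \<longleftrightarrow> \<not> (\<exists>r. q = p @ r) \<and> \<not> (\<exists>r. p = q @ r)"

definition pairwise_parallel :: "pos list \<Rightarrow> bool" where
  "pairwise_parallel ps \<longleftrightarrow>
     (\<forall>i j. i < length ps \<and> j < length ps \<and> i \<noteq> j \<longrightarrow> parallel_pos (ps ! i) (ps ! j))"

definition wf_trs :: "('f, 'v) trs \<Rightarrow> bool" where
  "wf_trs R \<longleftrightarrow> (\<forall>(l, r) \<in> R. (\<forall>x. l \<noteq> Var x) \<and> vars r \<subseteq> vars l)"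

fun linear_term :: "('f, 'v) term \<Rightarrow> bool" where
  "linear_term (Var x) = True"
| "linear_term (Fun f ts) =
     ((\<forall>t \<in> set ts. linear_term t) \<and>
      (\<forall>i j. i < length ts \<and> j < length ts \<and> i \<noteq> j \<longrightarrow> vars (ts ! i) \<inter> vars (ts ! j) = {}))"

definition left_linear :: "('f, 'v) trs \<Rightarrow> bool" where
  "left_linear R \<longleftrightarrow> (\<forall>(l, r) \<in> R. linear_term l)"

definition rstep :: "('f, 'v) trs \<Rightarrow> ('f, 'v) term rel" where
  "rstep R = {(s, t). \<exists>p l r \<sigma>. (l, r) \<in> R \<and> p \<in> poss s \<and> s |_ p = l \<cdot> \<sigma> \<and> t = replace_at s p (r \<cdot> \<sigma>)}"

text \<open>Parallel step \<open>\<Rightarrow>_R\<close>: a (finite, duplicate-free) enumeration \<open>ps\<close> of a set \<open>P\<close> of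
  pairwise parallel positions of \<open>s\<close>.\<close>
definition par_step :: "('f, 'v) trs \<Rightarrow> ('f, 'v) term rel" where
  "par_step R = {(s, t). \<exists>ps. distinct ps \<and> set ps \<subseteq> poss s \<and> pairwise_parallel ps \<and>
      (\<forall>p \<in> set ps. \<exists>l r \<mu>. (l, r) \<in> R \<and> s |_ p = l \<cdot> \<mu> \<and> t |_ p = r \<cdot> \<mu>) \<and>
      t = replace_all s (map (\<lambda>p. (p, t |_ p)) ps)}"

definition conv :: "('f, 'v) trs \<Rightarrow> ('f, 'v) term rel" where
  "conv C = (rstep C \<union> (rstep C)\<inverse>)\<^sup>*"

definition join :: "('f, 'v) trs \<Rightarrow> ('f, 'v) term rel" where
  "join R = (rstep R)\<^sup>* O ((rstep R)\<^sup>*)\<inverse>"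

definition is_variant :: "('f, 'v) rule \<Rightarrow> ('f, 'v) rule \<Rightarrow> bool" where
  "is_variant lr' lr \<longleftrightarrow> (\<exists>\<pi>. bij \<pi> \<and>
      fst lr' = fst lr \<cdot> (Var \<circ> \<pi>) \<and> snd lr' = snd lr \<cdot> (Var \<circ> \<pi>))"

definition variant_of :: "('f, 'v) rule \<Rightarrow> ('f, 'v) trs \<Rightarrow> bool" where
  "variant_of lr' R \<longleftrightarrow> (\<exists>lr \<in> R. is_variant lr' lr)"

definition subst_compose :: "('v \<Rightarrow> ('f, 'v) term) \<Rightarrow> ('v \<Rightarrow> ('f, 'v) term) \<Rightarrow> ('v \<Rightarrow> ('f, 'v) term)" where
  "subst_compose \<sigma> \<delta> = (\<lambda>x. \<sigma> x \<cdot> \<delta>)"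

definition is_unifier :: "('v \<Rightarrow> ('f, 'v) term) \<Rightarrow> (('f, 'v) term \<times> ('f, 'v) term) set \<Rightarrow> bool" where
  "is_unifier \<sigma> E \<longleftrightarrow> (\<forall>(a, b) \<in> E. a \<cdot> \<sigma> = b \<cdot> \<sigma>)"

definition is_mgu :: "('v \<Rightarrow> ('f, 'v) term) \<Rightarrow> (('f, 'v) term \<times> ('f, 'v) term) set \<Rightarrow> bool" where
  "is_mgu \<sigma> E \<longleftrightarrow> is_unifier \<sigma> E \<and> (\<forall>\<tau>. is_unifier \<tau> E \<longrightarrow> (\<exists>\<delta>. \<tau> = subst_compose \<sigma> \<delta>))"

text \<open>\<open>par_crit_peak R S s t u\<close>: \<open>t _R\<Leftarrow> s \<rightarrow>^\<epsilon>_S u\<close> is a parallel critical peak between R and S.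
  The nonempty set P is enumerated by the duplicate-free list \<open>ps\<close>; \<open>lrs p\<close> is the R-rule variant at \<open>p\<close>.\<close>
definition par_crit_peak ::
  "('f, 'v) trs \<Rightarrow> ('f, 'v) trs \<Rightarrow> ('f, 'v) term \<Rightarrow> ('f, 'v) term \<Rightarrow> ('f, 'v) term \<Rightarrow> bool" where
  "par_crit_peak R S s t u \<longleftrightarrow>
    (\<exists>l r ps lrs \<sigma>.
       variant_of (l, r) S \<and>
       ps \<noteq> [] \<and> distinct ps \<and> set ps \<subseteq> fun_poss l \<and> pairwise_parallel ps \<and>
       (\<forall>p \<in> set ps. variant_of (lrs p) R) \<and>
       (\<forall>p \<in> set ps. vars_rule (lrs p) \<inter> vars_rule (l, r) = {}) \<and>
       (\<forall>p \<in> set ps. \<forall>q \<in> set ps. p \<noteq> q \<longrightarrow> vars_rule (lrs p) \<inter> vars_rule (lrs q) = {}) \<and>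
       is_mgu \<sigma> {(fst (lrs p), l |_ p) | p. p \<in> set ps} \<and>
       (ps = [[]] \<longrightarrow> \<not> is_variant (lrs []) (l, r)) \<and>
       s = l \<cdot> \<sigma> \<and>
       t = replace_all (l \<cdot> \<sigma>) (map (\<lambda>p. (p, snd (lrs p) \<cdot> \<sigma>)) ps) \<and>
       u = r \<cdot> \<sigma>)"

definition PCPS :: "('f, 'v) trs \<Rightarrow> ('f, 'v) trs \<Rightarrow> ('f, 'v) trs" where
  "PCPS R C = {(s, v) | s v. \<exists>t u. par_crit_peak R R s t u \<and> (t, u) \<notin> conv C \<and> (v = t \<or> v = u)}"

end

theory Submission
  imports Defs
begin

text \<open>If neither parallel step rewrites at the root,
  the peak splits into peaks between the arguments: a peak closed through \<open>PCPS\<close> lifts into the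
  context, and if all of them are closed by conversion, these combine argument-wise.

  If one step rewrites \<open>l\<sigma>\<close> to \<open>r\<sigma>\<close> at the root, linearity of \<open>l\<close> splits the other step into
  rule applications at pairwise parallel function positions \<open>Q\<close> of \<open>l\<close> and a step
  \<open>\<sigma> \<Rightarrow> \<sigma>'\<close> inside the substitution. After renaming the rules applied at \<open>Q\<close> apart, their
  left-hand sides and the subterms \<open>l|\<^sub>q\<close> are linear and variable-disjoint, so they have an
  idempotent mgu \<open>\<theta>\<close>, which gives a parallel critical peak
  \<open>t\<^sub>0 \<Leftarrow> l\<theta> \<rightarrow> r\<theta>\<close> (unless the only overlap is the rule itself at the root) whose
  instance is the given peak up to the steps in \<open>\<sigma>\<close>. If \<open>t\<^sub>0\<close> and \<open>r\<theta>\<close> are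
  \<open>C\<close>-convertible, so are their instances and (i) holds; otherwise both steps of the critical peak
  are \<open>PCPS\<close> rules, and its joinability gives (ii).\<close>

section \<open>Terms, substitutions and positions\<close>

lemma subst_subst_compose: "t \<cdot> \<sigma> \<cdot> \<tau> = t \<cdot> subst_compose \<sigma> \<tau>"
  by (induction t) (auto simp: subst_compose_def)

lemma subst_cong: "(\<And>x. x \<in> vars t \<Longrightarrow> \<sigma> x = \<tau> x) \<Longrightarrow> t \<cdot> \<sigma> = t \<cdot> \<tau>"
  by (induction t) auto

lemma subst_eq_imp_eq_on_vars: "t \<cdot> \<sigma> = t \<cdot> \<tau> \<Longrightarrow> x \<in> vars t \<Longrightarrow> \<sigma> x = \<tau> x"
  by (induction t) auto

lemma subst_Var [simp]: "t \<cdot> Var = t"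
  by (induction t) (auto simp: map_idI)

lemma subst_rename: "t \<cdot> (Var \<circ> \<pi>) \<cdot> \<tau> = t \<cdot> (\<tau> \<circ> \<pi>)"
  by (induction t) auto

lemma vars_rename: "vars (t \<cdot> (Var \<circ> \<pi>)) = \<pi> ` vars t"
  by (induction t) auto

lemma subst_override_on_disjoint: "vars u \<inter> N = {} \<Longrightarrow> u \<cdot> override_on \<rho> \<nu> N = u \<cdot> \<rho>"
  by (intro subst_cong) (auto simp: override_on_def)

lemma subst_override_on_subset: "vars u \<subseteq> N \<Longrightarrow> u \<cdot> override_on \<rho> \<nu> N = u \<cdot> \<nu>"
  by (intro subst_cong) (auto simp: override_on_def)

lemma finite_vars [simp]: "finite (vars t)"
  by (induction t) auto

lemma vars_rule_pair [simp]: "vars_rule (l, r) = vars l \<union> vars r"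
  by (simp add: vars_rule_def)

lemma linear_term_rename: "inj \<pi> \<Longrightarrow> linear_term t \<Longrightarrow> linear_term (t \<cdot> (Var \<circ> \<pi>))"
proof (induction t)
  case (Fun f ts)
  have "\<forall>i j. i < length ts \<and> j < length ts \<and> i \<noteq> j \<longrightarrow> \<pi> ` vars (ts ! i) \<inter> \<pi> ` vars (ts ! j) = {}"
    using Fun.prems by (auto simp: image_Int[symmetric])
  then show ?case using Fun by (auto simp: vars_rename[unfolded comp_def])
qed simp

lemma poss_Nil [simp]: "[] \<in> poss t"
  by (cases t) auto

lemma poss_Fun_Cons [simp]: "i # q \<in> poss (Fun f ts) \<longleftrightarrow> i < length ts \<and> q \<in> poss (ts ! i)"
  by (force simp: set_zip in_set_zip)

declare poss.simps(2) [simp del]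

lemma fun_poss_Fun_Cons [simp]: "i # q \<in> fun_poss (Fun f ts) \<longleftrightarrow> i < length ts \<and> q \<in> fun_poss (ts ! i)"
  by (auto simp: fun_poss_def)

lemma fun_poss_Nil_Fun [simp]: "[] \<in> fun_poss (Fun f ts)"
  by (auto simp: fun_poss_def)

lemma fun_poss_imp_poss: "p \<in> fun_poss t \<Longrightarrow> p \<in> poss t"
  by (auto simp: fun_poss_def)

lemma vars_subt_at: "p \<in> poss t \<Longrightarrow> vars (t |_ p) \<subseteq> vars t"
proof (induction t arbitrary: p)
  case (Fun f ts)
  then show ?case by (cases p) (auto, meson nth_mem subsetD)
qed simp

lemma linear_term_subt_at: "p \<in> poss t \<Longrightarrow> linear_term t \<Longrightarrow> linear_term (t |_ p)"
proof (induction t arbitrary: p)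
  case (Fun f ts)
  then show ?case by (cases p) auto
qed simp

lemma parallel_pos_Cons: "parallel_pos (i # p) (j # q) \<longleftrightarrow> i \<noteq> j \<or> parallel_pos p q"
  by (auto simp: parallel_pos_def)

lemma not_parallel_pos_Nil [simp]: "\<not> parallel_pos [] q" "\<not> parallel_pos p []"
  by (auto simp: parallel_pos_def)

lemma pairwise_parallel_iff:
  "distinct ps \<Longrightarrow> pairwise_parallel ps \<longleftrightarrow> (\<forall>p \<in> set ps. \<forall>q \<in> set ps. p \<noteq> q \<longrightarrow> parallel_pos p q)"
  unfolding pairwise_parallel_def by (metis distinct_Ex1 in_set_conv_nth nth_eq_iff_index_eq)

lemma linear_term_parallel_vars_disjoint:
  "linear_term t \<Longrightarrow> p \<in> poss t \<Longrightarrow> q \<in> poss t \<Longrightarrow> parallel_pos p q \<Longrightarrow>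
   vars (t |_ p) \<inter> vars (t |_ q) = {}"
proof (induction t arbitrary: p q)
  case (Fun f ts)
  obtain i p' j q' where p: "p = i # p'" and q: "q = j # q'"
    using Fun.prems by (cases p; cases q) auto
  show ?case
  proof (cases "i = j")
    case False
    have "vars (ts ! i |_ p') \<subseteq> vars (ts ! i)" "vars (ts ! j |_ q') \<subseteq> vars (ts ! j)"
      using Fun.prems p q by (auto intro!: vars_subt_at)
    moreover have "vars (ts ! i) \<inter> vars (ts ! j) = {}"
      using Fun.prems p q False by auto
    ultimately show ?thesis using Fun.prems p q by auto
  qed (use Fun p q in \<open>auto simp: parallel_pos_Cons\<close>)
qed simp

lemma poss_subst: "p \<in> poss t \<Longrightarrow> p \<in> poss (t \<cdot> \<sigma>)"
proof (induction t arbitrary: p)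
  case (Fun f ts)
  then show ?case by (cases p) auto
qed simp

lemma subt_at_subst: "p \<in> poss t \<Longrightarrow> (t \<cdot> \<sigma>) |_ p = (t |_ p) \<cdot> \<sigma>"
proof (induction t arbitrary: p)
  case (Fun f ts)
  then show ?case by (cases p) auto
qed simp

lemma replace_at_subst: "p \<in> poss t \<Longrightarrow> replace_at t p u \<cdot> \<sigma> = replace_at (t \<cdot> \<sigma>) p (u \<cdot> \<sigma>)"
proof (induction t arbitrary: p)
  case (Fun f ts)
  then show ?case by (cases p) (auto simp: map_update)
qed simp

lemma poss_replace_at_parallel:
  "p \<in> poss s \<Longrightarrow> parallel_pos p q \<Longrightarrow> p \<in> poss (replace_at s q u)"
proof (induction s arbitrary: p q)
  case (Fun f ts)
  obtain i p' j q' where p: "p = i # p'" and q: "q = j # q'"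
    using Fun.prems by (cases p; cases q) auto
  then show ?case
    using Fun by (cases "i = j") (auto simp: parallel_pos_Cons nth_list_update)
qed simp

lemma replace_all_Nil [simp]: "replace_all s [] = s"
  by (simp add: replace_all_def)

lemma replace_all_Cons [simp]: "replace_all s ((p, u) # pus) = replace_at (replace_all s pus) p u"
  by (simp add: replace_all_def)

lemma poss_replace_all_parallel:
  "p \<in> poss s \<Longrightarrow> \<forall>q \<in> set qs. parallel_pos p q \<Longrightarrow> p \<in> poss (replace_all s (map (\<lambda>q. (q, g q)) qs))"
  by (induction qs) (auto intro: poss_replace_at_parallel)

lemma replace_all_subst:
  assumes "distinct ps" "set ps \<subseteq> poss s" "pairwise_parallel ps"
  shows "replace_all s (map (\<lambda>p. (p, g p)) ps) \<cdot> \<tau> = replace_all (s \<cdot> \<tau>) (map (\<lambda>p. (p, g p \<cdot> \<tau>)) ps)"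
  using assms
proof (induction ps)
  case (Cons p ps)
  have "p \<in> poss (replace_all s (map (\<lambda>q. (q, g q)) ps))"
    using Cons.prems by (intro poss_replace_all_parallel) (auto simp: pairwise_parallel_iff)
  then show ?case
    using Cons by (simp add: replace_at_subst pairwise_parallel_iff)
qed simp

section \<open>Parallel rewriting as an inductive relation\<close>

inductive par :: "('f, 'v) trs \<Rightarrow> ('f, 'v) term \<Rightarrow> ('f, 'v) term \<Rightarrow> bool" for R where
  par_Var: "par R (Var x) (Var x)"
| par_rule: "(l, r) \<in> R \<Longrightarrow> par R (l \<cdot> \<mu>) (r \<cdot> \<mu>)"
| par_Fun: "length ss = length ts \<Longrightarrow> (\<And>i. i < length ts \<Longrightarrow> par R (ss ! i) (ts ! i)) \<Longrightarrow>
    par R (Fun f ss) (Fun f ts)"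

lemma par_refl: "par R t t"
  by (induction t) (auto intro!: par.intros)

lemma par_subst: "(\<And>x. x \<in> vars t \<Longrightarrow> par R (\<sigma> x) (\<tau> x)) \<Longrightarrow> par R (t \<cdot> \<sigma>) (t \<cdot> \<tau>)"
proof (induction t)
  case (Fun f ts)
  have "par R (ts ! i \<cdot> \<sigma>) (ts ! i \<cdot> \<tau>)" if i: "i < length ts" for i
  proof (rule Fun.IH)
    fix x
    assume "x \<in> vars (ts ! i)"
    then show "par R (\<sigma> x) (\<tau> x)" using i by (intro Fun.prems) (auto intro: nth_mem)
  qed (use i in simp)
  then show ?case by (auto intro: par_Fun)
qed simp

primrec poss_below :: "nat \<Rightarrow> pos list \<Rightarrow> pos list" where
  "poss_below i [] = []"
| "poss_below i (p # ps) =
     (case p of [] \<Rightarrow> poss_below i ps | j # q \<Rightarrow> if j = i then q # poss_below i ps else poss_below i ps)"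

lemma set_poss_below [simp]: "set (poss_below i ps) = {q. i # q \<in> set ps}"
  by (induction ps) (auto split: list.splits)

lemma distinct_poss_below: "distinct ps \<Longrightarrow> distinct (poss_below i ps)"
  by (induction ps) (auto split: list.splits)

lemma pairwise_parallel_poss_below:
  "distinct ps \<Longrightarrow> pairwise_parallel ps \<Longrightarrow> pairwise_parallel (poss_below i ps)"
  by (simp add: pairwise_parallel_iff distinct_poss_below) (metis list.inject parallel_pos_Cons)

lemma replace_all_Fun:
  assumes "\<forall>p \<in> set ps. \<exists>i q. p = i # q \<and> i < length ss"
  shows "replace_all (Fun f ss) (map (\<lambda>p. (p, g p)) ps) =
    Fun f (map (\<lambda>i. replace_all (ss ! i) (map (\<lambda>q. (q, g (i # q))) (poss_below i ps))) [0..<length ss])"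
  using assms
proof (induction ps)
  case Nil
  then show ?case by (simp add: map_nth)
next
  case (Cons p ps)
  then obtain i q where "p = i # q" "i < length ss" by auto
  with Cons show ?case by (auto intro!: nth_equalityI simp: nth_list_update)
qed

definition arg_poss :: "(nat \<Rightarrow> pos list) \<Rightarrow> nat \<Rightarrow> pos list" where
  "arg_poss PS n = concat (map (\<lambda>i. map (Cons i) (PS i)) [0..<n])"

lemma set_arg_poss: "set (arg_poss PS n) = {i # q | i q. i < n \<and> q \<in> set (PS i)}"
  by (auto simp: arg_poss_def)

lemma distinct_arg_poss: "(\<And>i. i < n \<Longrightarrow> distinct (PS i)) \<Longrightarrow> distinct (arg_poss PS n)"
  unfolding arg_poss_def by (induction n) (auto simp: distinct_map)

lemma pairwise_parallel_arg_poss: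
  assumes "\<And>i. i < n \<Longrightarrow> distinct (PS i) \<and> pairwise_parallel (PS i)"
  shows "pairwise_parallel (arg_poss PS n)"
proof -
  have "parallel_pos (i # p) (j # q)"
    if "i < n" "p \<in> set (PS i)" "j < n" "q \<in> set (PS j)" "i # p \<noteq> j # q" for i j p q
    using assms[of i] that by (cases "i = j") (auto simp: pairwise_parallel_iff parallel_pos_Cons)
  moreover have "distinct (arg_poss PS n)"
    using assms by (auto intro: distinct_arg_poss)
  ultimately show ?thesis by (auto simp: pairwise_parallel_iff set_arg_poss)
qed

lemma poss_below_arg_poss: "poss_below i (arg_poss PS n) = (if i < n then PS i else [])"
proof -
  have [simp]: "poss_below i (xs @ ys) = poss_below i xs @ poss_below i ys" for xs ys
    by (induction xs) (auto split: list.splits)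
  have [simp]: "poss_below i (map (Cons j) qs) = (if i = j then qs else [])" for j qs
    by (induction qs) auto
  show ?thesis unfolding arg_poss_def by (induction n) auto
qed

lemma replace_all_Fun_arg_poss:
  "replace_all (Fun f ss) (map (\<lambda>p. (p, g p)) (arg_poss PS (length ss))) =
   Fun f (map (\<lambda>i. replace_all (ss ! i) (map (\<lambda>q. (q, g (i # q))) (PS i))) [0..<length ss])"
  by (subst replace_all_Fun) (auto simp: set_arg_poss poss_below_arg_poss)

definition par_step_positions ::
  "('f, 'v) trs \<Rightarrow> ('f, 'v) term \<Rightarrow> ('f, 'v) term \<Rightarrow> pos list \<Rightarrow> bool" where
  "par_step_positions R s t ps \<longleftrightarrow> distinct ps \<and> set ps \<subseteq> poss s \<and> pairwise_parallel ps \<and>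
     (\<forall>p \<in> set ps. \<exists>l r \<mu>. (l, r) \<in> R \<and> s |_ p = l \<cdot> \<mu> \<and> t |_ p = r \<cdot> \<mu>) \<and>
     t = replace_all s (map (\<lambda>p. (p, t |_ p)) ps)"

lemma par_step_positionsD:
  assumes "par_step_positions R s t ps"
  shows "distinct ps" "set ps \<subseteq> poss s" "pairwise_parallel ps"
    "\<forall>p \<in> set ps. \<exists>l r \<mu>. (l, r) \<in> R \<and> s |_ p = l \<cdot> \<mu> \<and> t |_ p = r \<cdot> \<mu>"
    "replace_all s (map (\<lambda>p. (p, t |_ p)) ps) = t"
  using assms unfolding par_step_positions_def by (blast, blast, blast, blast, metis)

lemma par_step_positions_root_imp_par:
  assumes "par_step_positions R s t ps" and "[] \<in> set ps"
  shows "par R s t"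
proof -
  obtain l r \<mu> where "(l, r) \<in> R" "s = l \<cdot> \<mu>" "t = r \<cdot> \<mu>"
    using par_step_positionsD(4)[OF assms(1)] assms(2) by force
  then show ?thesis by (simp add: par_rule)
qed

lemma par_step_positions_imp_par: "par_step_positions R s t ps \<Longrightarrow> par R s t"
proof (induction s arbitrary: ps t)
  case (Var x)
  show ?case
  proof (cases "[] \<in> set ps")
    case False
    with par_step_positionsD(2)[OF Var.prems] have "ps = []" by (cases ps) auto
    then have "t = Var x" using par_step_positionsD(5)[OF Var.prems] by simp
    then show ?thesis by (simp add: par_refl)
  qed (rule par_step_positions_root_imp_par[OF Var.prems])
next
  case (Fun f ss)
  note ps = par_step_positionsD[OF Fun.prems]
  show ?case
  proof (cases "[] \<in> set ps")
    case False
    have args: "\<forall>p \<in> set ps. \<exists>i q. p = i # q \<and> i < length ss"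
      using ps(2) False by (metis subsetD neq_Nil_conv poss_Fun_Cons)
    define F where "F i = replace_all (ss ! i) (map (\<lambda>q. (q, t |_ (i # q))) (poss_below i ps))" for i
    have t: "t = Fun f (map F [0..<length ss])"
      unfolding F_def by (subst ps(5)[symmetric]) (rule replace_all_Fun[OF args])
    have "par R (ss ! i) (F i)" if i: "i < length ss" for i
    proof (rule Fun.IH)
      have F_subt_at: "F i |_ q = t |_ (i # q)" for q
        using i by (subst t) simp
      have "\<exists>l r \<mu>. (l, r) \<in> R \<and> ss ! i |_ q = l \<cdot> \<mu> \<and> F i |_ q = r \<cdot> \<mu>"
        if "q \<in> set (poss_below i ps)" for q
        using bspec[OF ps(4), of "i # q"] that i by (auto simp: F_subt_at)
      moreover have "F i = replace_all (ss ! i) (map (\<lambda>q. (q, F i |_ q)) (poss_below i ps))"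
        unfolding F_subt_at by (simp add: F_def)
      ultimately show "par_step_positions R (ss ! i) (F i) (poss_below i ps)"
        using ps(1-3) i by (auto simp: par_step_positions_def distinct_poss_below
            pairwise_parallel_poss_below)
    qed (use i in simp)
    then show ?thesis by (subst t) (auto intro: par_Fun)
  qed (rule par_step_positions_root_imp_par[OF Fun.prems])
qed

lemma par_imp_par_step_positions: "par R s t \<Longrightarrow> \<exists>ps. par_step_positions R s t ps"
proof (induction rule: par.induct)
  case (par_Var x)
  show ?case by (rule exI[of _ "[]"]) (simp add: par_step_positions_def pairwise_parallel_def)
next
  case (par_rule l r \<mu>)
  show ?case
    by (rule exI[of _ "[[]]"]) (use par_rule in \<open>auto simp: par_step_positions_def pairwise_parallel_def\<close>)
next
  case (par_Fun ss ts f)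
  obtain PS where PS: "\<And>i. i < length ts \<Longrightarrow> par_step_positions R (ss ! i) (ts ! i) (PS i)"
    using par_Fun.IH by metis
  let ?ps = "arg_poss PS (length ss)"
  have PS_positions: "distinct (PS i) \<and> set (PS i) \<subseteq> poss (ss ! i) \<and> pairwise_parallel (PS i)"
    and PS_rules: "\<forall>p \<in> set (PS i). \<exists>l r \<mu>. (l, r) \<in> R \<and> ss ! i |_ p = l \<cdot> \<mu> \<and> ts ! i |_ p = r \<cdot> \<mu>"
    and PS_replace: "replace_all (ss ! i) (map (\<lambda>q. (q, ts ! i |_ q)) (PS i)) = ts ! i"
    if "i < length ts" for i
    using par_step_positionsD[OF PS[OF that]] by simp_all
  have "replace_all (Fun f ss) (map (\<lambda>p. (p, Fun f ts |_ p)) ?ps) =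
    Fun f (map (\<lambda>i. replace_all (ss ! i) (map (\<lambda>q. (q, Fun f ts |_ (i # q))) (PS i))) [0..<length ss])"
    by (rule replace_all_Fun_arg_poss)
  also have "\<dots> = Fun f ts"
    using par_Fun.hyps(1) PS_replace by (auto intro!: nth_equalityI)
  finally have "Fun f ts = replace_all (Fun f ss) (map (\<lambda>p. (p, Fun f ts |_ p)) ?ps)" ..
  moreover have "distinct ?ps" "pairwise_parallel ?ps"
    using PS_positions par_Fun.hyps(1) by (auto intro: distinct_arg_poss pairwise_parallel_arg_poss)
  moreover have "set ?ps \<subseteq> poss (Fun f ss)"
    using PS_positions par_Fun.hyps(1) by (fastforce simp: set_arg_poss)
  moreover have "\<exists>l r \<mu>. (l, r) \<in> R \<and> Fun f ss |_ p = l \<cdot> \<mu> \<and> Fun f ts |_ p = r \<cdot> \<mu>"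
    if p: "p \<in> set ?ps" for p
  proof -
    obtain i q where "p = i # q" "i < length ss" "q \<in> set (PS i)"
      using p unfolding set_arg_poss by blast
    then show ?thesis using PS_rules[of i] par_Fun.hyps(1) by auto
  qed
  ultimately show ?case unfolding par_step_positions_def by blast
qed

lemma par_step_iff_par: "(s, t) \<in> par_step R \<longleftrightarrow> par R s t"
proof -
  have "(s, t) \<in> par_step R \<longleftrightarrow> (\<exists>ps. par_step_positions R s t ps)"
    unfolding par_step_def par_step_positions_def by simp
  then show ?thesis
    using par_step_positions_imp_par par_imp_par_step_positions by blast
qed

section \<open>Closure properties of rewriting, conversion and joinability\<close>

lemma rstep_rule: "(l, r) \<in> R \<Longrightarrow> (l \<cdot> \<sigma>, r \<cdot> \<sigma>) \<in> rstep R"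
  unfolding rstep_def by (intro CollectI, simp) (intro exI[of _ "[]"], auto)

lemma rstep_arg:
  assumes "(s, t) \<in> rstep R" and i: "i < length ss"
  shows "(Fun f (ss[i := s]), Fun f (ss[i := t])) \<in> rstep R"
proof -
  obtain p l r \<sigma> where "(l, r) \<in> R" "p \<in> poss s" "s |_ p = l \<cdot> \<sigma>" "t = replace_at s p (r \<cdot> \<sigma>)"
    using assms(1) unfolding rstep_def by blast
  moreover have "i # p \<in> poss (Fun f (ss[i := s]))" "Fun f (ss[i := s]) |_ (i # p) = l \<cdot> \<sigma>"
    and "Fun f (ss[i := t]) = replace_at (Fun f (ss[i := s])) (i # p) (r \<cdot> \<sigma>)"
    using calculation i by simp_all
  ultimately show ?thesis unfolding rstep_def by blast
qed

lemma rstep_subst: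
  assumes "(s, t) \<in> rstep R"
  shows "(s \<cdot> \<tau>, t \<cdot> \<tau>) \<in> rstep R"
proof -
  obtain p l r \<sigma> where "(l, r) \<in> R" and p: "p \<in> poss s" and "s |_ p = l \<cdot> \<sigma>"
    and "t = replace_at s p (r \<cdot> \<sigma>)"
    using assms unfolding rstep_def by blast
  moreover have "p \<in> poss (s \<cdot> \<tau>)" "(s \<cdot> \<tau>) |_ p = l \<cdot> subst_compose \<sigma> \<tau>"
    and "t \<cdot> \<tau> = replace_at (s \<cdot> \<tau>) p (r \<cdot> subst_compose \<sigma> \<tau>)"
    using calculation by (simp_all add: poss_subst subt_at_subst replace_at_subst subst_subst_compose)
  ultimately show ?thesis unfolding rstep_def by blast
qed

lemma rsteps_subst: "(s, t) \<in> (rstep R)\<^sup>* \<Longrightarrow> (s \<cdot> \<tau>, t \<cdot> \<tau>) \<in> (rstep R)\<^sup>*"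
  by (induction rule: rtrancl_induct) (auto intro: rtrancl_into_rtrancl rstep_subst)

lemma rsteps_arg:
  "(s, t) \<in> (rstep R)\<^sup>* \<Longrightarrow> i < length ss \<Longrightarrow> (Fun f (ss[i := s]), Fun f (ss[i := t])) \<in> (rstep R)\<^sup>*"
  by (induction rule: rtrancl_induct) (auto intro: rtrancl_into_rtrancl rstep_arg)

lemma conv_refl [simp]: "(s, s) \<in> conv C"
  by (simp add: conv_def)

lemma conv_sym: "(s, t) \<in> conv C \<Longrightarrow> (t, s) \<in> conv C"
  unfolding conv_def by (metis converse_Un converse_converse rtrancl_converseI sup_commute)

lemma conv_subst: "(s, t) \<in> conv C \<Longrightarrow> (s \<cdot> \<tau>, t \<cdot> \<tau>) \<in> conv C"
  unfolding conv_def by (induction rule: rtrancl_induct) (auto intro: rtrancl_into_rtrancl rstep_subst)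

lemma conv_arg:
  "(s, t) \<in> conv C \<Longrightarrow> i < length ss \<Longrightarrow> (Fun f (ss[i := s]), Fun f (ss[i := t])) \<in> conv C"
  unfolding conv_def by (induction rule: rtrancl_induct) (auto intro: rtrancl_into_rtrancl rstep_arg)

lemma conv_args_append:
  "list_all2 (\<lambda>s t. (s, t) \<in> conv C) ss ts \<Longrightarrow> (Fun f (pre @ ss), Fun f (pre @ ts)) \<in> conv C"
proof (induction ss ts arbitrary: pre rule: list_all2_induct)
  case (Cons s ss t ts)
  have "(Fun f (pre @ s # ss), Fun f (pre @ t # ss)) \<in> conv C"
    using conv_arg[OF Cons(1), of "length pre" "pre @ s # ss" f] by (simp add: list_update_length)
  moreover have "(Fun f ((pre @ [t]) @ ss), Fun f ((pre @ [t]) @ ts)) \<in> conv C"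
    by (rule Cons.IH)
  ultimately show ?case unfolding conv_def by simp
qed simp

lemma conv_args:
  "length ss = length ts \<Longrightarrow> (\<And>i. i < length ts \<Longrightarrow> (ss ! i, ts ! i) \<in> conv C) \<Longrightarrow>
   (Fun f ss, Fun f ts) \<in> conv C"
  using conv_args_append[of C ss ts f "[]"] by (simp add: list_all2_conv_all_nth)

lemma join_sym: "(s, t) \<in> join R \<Longrightarrow> (t, s) \<in> join R"
  unfolding join_def by auto

lemma join_subst: "(s, t) \<in> join R \<Longrightarrow> (s \<cdot> \<tau>, t \<cdot> \<tau>) \<in> join R"
  unfolding join_def by (auto intro: rsteps_subst)

lemma join_arg: "(s, t) \<in> join R \<Longrightarrow> i < length ss \<Longrightarrow> (Fun f (ss[i := s]), Fun f (ss[i := t])) \<in> join R"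
  unfolding join_def by (auto intro: rsteps_arg)

section \<open>Most general unifiers of linear terms\<close>

lemma merge_on_disjoint_family:
  assumes "\<forall>i \<in> I. \<forall>j \<in> I. i \<noteq> j \<longrightarrow> V i \<inter> V j = {}"
  obtains \<sigma> where "\<And>i x. i \<in> I \<Longrightarrow> x \<in> V i \<Longrightarrow> \<sigma> x = f i x"
    and "\<And>x. x \<notin> (\<Union>i \<in> I. V i) \<Longrightarrow> \<sigma> x = g x"
proof
  define \<sigma> where "\<sigma> x = (if \<exists>i \<in> I. x \<in> V i then f (SOME i. i \<in> I \<and> x \<in> V i) x else g x)" for x
  show "\<sigma> x = f i x" if "i \<in> I" "x \<in> V i" for i x
  proof -
    have "(SOME i. i \<in> I \<and> x \<in> V i) = i"
      using that assms by (intro some_equality) auto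
    then show ?thesis using that unfolding \<sigma>_def by auto
  qed
  show "\<sigma> x = g x" if "x \<notin> (\<Union>i \<in> I. V i)" for x
    using that unfolding \<sigma>_def by auto
qed

lemma subst_compose_eq_iff: "subst_compose \<theta> \<tau> = \<tau> \<longleftrightarrow> (\<forall>x. \<theta> x \<cdot> \<tau> = \<tau> x)"
  by (auto simp: subst_compose_def fun_eq_iff)

lemma subst_Fun_eq_iff:
  "Fun f ss \<cdot> \<tau> = Fun g ts \<cdot> \<tau> \<longleftrightarrow>
   f = g \<and> length ts = length ss \<and> (\<forall>i < length ss. ss ! i \<cdot> \<tau> = ts ! i \<cdot> \<tau>)"
  by (auto simp: list_eq_iff_nth_eq)

definition is_imgu :: "('v \<Rightarrow> ('f, 'v) term) \<Rightarrow> ('f, 'v) term \<Rightarrow> ('f, 'v) term \<Rightarrow> bool" where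
  "is_imgu \<theta> s t \<longleftrightarrow> s \<cdot> \<theta> = t \<cdot> \<theta> \<and> (\<forall>\<tau>. s \<cdot> \<tau> = t \<cdot> \<tau> \<longrightarrow> subst_compose \<theta> \<tau> = \<tau>)"

lemma is_imgu_sym: "is_imgu \<theta> s t \<Longrightarrow> is_imgu \<theta> t s"
  by (auto simp: is_imgu_def)

lemma Var_imgu: "x \<notin> vars t \<Longrightarrow> is_imgu (Var(x := t)) (Var x) t"
proof -
  assume "x \<notin> vars t"
  then have "t \<cdot> Var(x := t) = t \<cdot> Var"
    by (intro subst_cong) auto
  then show ?thesis
    by (auto simp: is_imgu_def subst_compose_eq_iff)
qed

text \<open>The idempotent mgus of the arguments can be merged because linearity and
  variable-disjointness make their domains disjoint.\<close>
lemma args_imgu: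
  assumes lin: "linear_term (Fun f ss)" "linear_term (Fun f ts)"
    and disj: "vars (Fun f ss) \<inter> vars (Fun f ts) = {}" and len: "length ts = length ss"
    and \<Theta>: "\<And>i. i < length ss \<Longrightarrow> is_imgu (\<Theta> i) (ss ! i) (ts ! i)"
  shows "\<exists>\<theta>. is_imgu \<theta> (Fun f ss) (Fun f ts)"
proof -
  define V where "V i = vars (ss ! i) \<union> vars (ts ! i)" for i
  have "\<forall>i \<in> {..<length ss}. \<forall>j \<in> {..<length ss}. i \<noteq> j \<longrightarrow> V i \<inter> V j = {}"
  proof (intro ballI impI)
    fix i j
    assume "i \<in> {..<length ss}" "j \<in> {..<length ss}" "i \<noteq> j"
    then have ij: "i < length ss" "j < length ss" "i \<noteq> j" by simp_all
    have "vars (ss ! i) \<inter> vars (ss ! j) = {}" "vars (ts ! i) \<inter> vars (ts ! j) = {}"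
      using lin ij len by simp_all
    moreover have "vars (ss ! k) \<subseteq> vars (Fun f ss)" "vars (ts ! k) \<subseteq> vars (Fun f ts)"
      if "k < length ss" for k
    proof -
      have "ss ! k \<in> set ss" "ts ! k \<in> set ts"
        using that len by simp_all
      then show "vars (ss ! k) \<subseteq> vars (Fun f ss)" "vars (ts ! k) \<subseteq> vars (Fun f ts)"
        by auto
    qed
    ultimately show "V i \<inter> V j = {}"
      using ij disj unfolding V_def by blast
  qed
  then obtain \<theta> where \<theta>_arg: "\<And>i x. i \<in> {..<length ss} \<Longrightarrow> x \<in> V i \<Longrightarrow> \<theta> x = \<Theta> i x"
    and \<theta>_out: "\<And>x. x \<notin> (\<Union>i \<in> {..<length ss}. V i) \<Longrightarrow> \<theta> x = Var x"
    by (rule merge_on_disjoint_family[where f = \<Theta> and g = Var]) blast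
  have "ss ! i \<cdot> \<theta> = ss ! i \<cdot> \<Theta> i" "ts ! i \<cdot> \<theta> = ts ! i \<cdot> \<Theta> i" if "i < length ss" for i
    using that \<theta>_arg by (auto intro!: subst_cong simp: V_def)
  then have "Fun f ss \<cdot> \<theta> = Fun f ts \<cdot> \<theta>"
    unfolding subst_Fun_eq_iff using \<Theta> len by (simp add: is_imgu_def)
  moreover have "\<theta> x \<cdot> \<tau> = \<tau> x" if "Fun f ss \<cdot> \<tau> = Fun f ts \<cdot> \<tau>" for \<tau> x
  proof (cases "x \<in> (\<Union>i \<in> {..<length ss}. V i)")
    case True
    then obtain i where "i < length ss" "x \<in> V i" by blast
    then show ?thesis
      using \<Theta> \<theta>_arg that[unfolded subst_Fun_eq_iff] by (simp add: is_imgu_def subst_compose_eq_iff)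
  qed (simp add: \<theta>_out)
  ultimately show ?thesis
    unfolding is_imgu_def subst_compose_eq_iff by blast
qed

lemma linear_terms_imgu:
  assumes "linear_term s" "linear_term t" "vars s \<inter> vars t = {}" "s \<cdot> \<tau> = t \<cdot> \<tau>"
  shows "\<exists>\<theta>. is_imgu \<theta> s t"
  using assms
proof (induction s arbitrary: t \<tau>)
  case (Var x)
  then show ?case using Var_imgu by fastforce
next
  case (Fun f ss)
  show ?case
  proof (cases t)
    case (Var y)
    then show ?thesis
      using Var_imgu[of y "Fun f ss"] Fun.prems(3) is_imgu_sym by fastforce
  next
    case (Fun g ts)
    have "g = f" and len: "length ts = length ss"
      and args: "\<And>i. i < length ss \<Longrightarrow> ss ! i \<cdot> \<tau> = ts ! i \<cdot> \<tau>"
      using Fun.prems(4) unfolding \<open>t = Fun g ts\<close> subst_Fun_eq_iff by simp_all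
    have "\<exists>\<theta>. is_imgu \<theta> (ss ! i) (ts ! i)" if i: "i < length ss" for i
    proof (rule Fun.IH)
      have "ss ! i \<in> set ss" "ts ! i \<in> set ts"
        using i len by simp_all
      then show "linear_term (ss ! i)" "linear_term (ts ! i)" "vars (ss ! i) \<inter> vars (ts ! i) = {}"
        using Fun.prems(1-3) \<open>t = Fun g ts\<close> by auto
    qed (use i args in auto)
    then obtain \<Theta> where "\<And>i. i < length ss \<Longrightarrow> is_imgu (\<Theta> i) (ss ! i) (ts ! i)"
      by metis
    then show ?thesis
      using args_imgu[OF Fun.prems(1) _ _ len] Fun.prems(2,3) \<open>t = Fun g ts\<close> \<open>g = f\<close> by blast
  qed
qed

lemma parallel_overlap_mgu:
  fixes l :: "('f, 'v) term" and ls :: "pos \<Rightarrow> ('f, 'v) term"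
  assumes lin: "linear_term l" and Q: "distinct Q" "set Q \<subseteq> poss l" "pairwise_parallel Q"
    and lin_ls: "\<And>p. p \<in> set Q \<Longrightarrow> linear_term (ls p)"
    and disj_l: "\<And>p. p \<in> set Q \<Longrightarrow> vars (ls p) \<inter> vars l = {}"
    and disj_ls: "\<And>p q. p \<in> set Q \<Longrightarrow> q \<in> set Q \<Longrightarrow> p \<noteq> q \<Longrightarrow> vars (ls p) \<inter> vars (ls q) = {}"
    and unif: "is_unifier \<tau> {(ls p, l |_ p) | p. p \<in> set Q}"
  obtains \<theta> where "is_mgu \<theta> {(ls p, l |_ p) | p. p \<in> set Q}"
    and "\<And>\<tau>'. is_unifier \<tau>' {(ls p, l |_ p) | p. p \<in> set Q} \<Longrightarrow> subst_compose \<theta> \<tau>' = \<tau>'"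
proof -
  let ?E = "{(ls p, l |_ p) | p. p \<in> set Q}"
  \<comment> \<open>the equations are solved simultaneously as one equation under an arbitrary common root symbol\<close>
  define S where "S = Fun undefined (map ls Q)"
  define T where "T = Fun undefined (map (\<lambda>p. l |_ p) Q)"
  have unif_iff: "is_unifier \<tau>' ?E \<longleftrightarrow> S \<cdot> \<tau>' = T \<cdot> \<tau>'" for \<tau>'
    unfolding is_unifier_def S_def T_def by (auto simp: map_eq_conv)
  have Q_nth: "Q ! i \<noteq> Q ! j" "Q ! i \<in> set Q" "Q ! j \<in> set Q"
    if "i < length Q" "j < length Q" "i \<noteq> j" for i j
    using that Q(1) by (simp_all add: nth_eq_iff_index_eq)
  have "linear_term S"
    using lin_ls disj_ls Q_nth unfolding S_def by auto
  moreover have "vars (l |_ (Q ! i)) \<inter> vars (l |_ (Q ! j)) = {}"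
    if "i < length Q" "j < length Q" "i \<noteq> j" for i j
    using Q(2,3) that Q_nth[OF that]
    by (intro linear_term_parallel_vars_disjoint[OF lin]) (auto simp: pairwise_parallel_def)
  then have "linear_term T"
    using Q(2) lin by (auto simp: T_def intro: linear_term_subt_at)
  moreover have "vars S \<inter> vars T = {}"
    using disj_l vars_subt_at Q(2) unfolding S_def T_def by fastforce
  moreover have "S \<cdot> \<tau> = T \<cdot> \<tau>"
    using unif unif_iff by blast
  ultimately obtain \<theta> where "S \<cdot> \<theta> = T \<cdot> \<theta>" and \<theta>: "\<And>\<tau>'. S \<cdot> \<tau>' = T \<cdot> \<tau>' \<Longrightarrow> subst_compose \<theta> \<tau>' = \<tau>'"
    using linear_terms_imgu unfolding is_imgu_def by blast
  then have "is_mgu \<theta> ?E"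
    unfolding is_mgu_def unif_iff by metis
  with \<theta> unif_iff that show ?thesis by blast
qed

lemma renamed_overlap_mgu:
  fixes lrs :: "pos \<Rightarrow> ('f, 'v) rule" and Q :: "pos list"
  defines "N \<equiv> \<Union>p \<in> set Q. vars_rule (lrs p)"
  assumes lin: "linear_term l" and Q: "distinct Q" "set Q \<subseteq> poss l" "pairwise_parallel Q"
    and lin_lrs: "\<And>p. p \<in> set Q \<Longrightarrow> linear_term (fst (lrs p))"
    and fresh: "\<And>p. p \<in> set Q \<Longrightarrow> vars_rule (lrs p) \<inter> vars l = {}"
    and apart: "\<And>p q. p \<in> set Q \<Longrightarrow> q \<in> set Q \<Longrightarrow> p \<noteq> q \<Longrightarrow> vars_rule (lrs p) \<inter> vars_rule (lrs q) = {}"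
    and match: "\<And>p. p \<in> set Q \<Longrightarrow> fst (lrs p) \<cdot> \<nu> = (l |_ p) \<cdot> \<sigma>"
  obtains \<theta> where "is_mgu \<theta> {(fst (lrs p), l |_ p) | p. p \<in> set Q}"
    and "\<And>\<rho> u. (\<And>q x. q \<in> set Q \<Longrightarrow> x \<in> vars (l |_ q) \<Longrightarrow> \<rho> x = \<sigma> x) \<Longrightarrow>
      u \<cdot> \<theta> \<cdot> override_on \<rho> \<nu> N = u \<cdot> override_on \<rho> \<nu> N"
proof -
  let ?E = "{(fst (lrs p), l |_ p) | p. p \<in> set Q}"
  have unifier: "is_unifier (override_on \<rho> \<nu> N) ?E"
    if agree: "\<And>q x. q \<in> set Q \<Longrightarrow> x \<in> vars (l |_ q) \<Longrightarrow> \<rho> x = \<sigma> x" for \<rho>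
  proof -
    have "fst (lrs p) \<cdot> override_on \<rho> \<nu> N = (l |_ p) \<cdot> override_on \<rho> \<nu> N" if p: "p \<in> set Q" for p
    proof -
      have "vars (l |_ p) \<inter> N = {}"
        using fresh vars_subt_at[of p l] p Q(2) unfolding N_def vars_rule_def by blast
      then have "(l |_ p) \<cdot> override_on \<rho> \<nu> N = (l |_ p) \<cdot> \<rho>"
        by (rule subst_override_on_disjoint)
      also have "\<dots> = (l |_ p) \<cdot> \<sigma>"
        using agree[OF p] by (rule subst_cong)
      moreover have "fst (lrs p) \<cdot> override_on \<rho> \<nu> N = fst (lrs p) \<cdot> \<nu>"
        using p by (intro subst_override_on_subset) (auto simp: N_def vars_rule_def)
      ultimately show ?thesis using match[OF p] by simp
    qed
    then show ?thesis unfolding is_unifier_def by blast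
  qed
  obtain \<theta> where "is_mgu \<theta> ?E" and absorb: "\<And>\<tau>. is_unifier \<tau> ?E \<Longrightarrow> subst_compose \<theta> \<tau> = \<tau>"
    using parallel_overlap_mgu[OF lin Q lin_lrs _ _ unifier[of \<sigma>]] fresh apart
    unfolding vars_rule_def by blast
  then show ?thesis
    using that absorb[OF unifier] by (simp add: subst_subst_compose)
qed

section \<open>Renaming rules apart\<close>

lemma inj_on_extend_to_bij:
  assumes inj: "inj_on f A" and disj: "f ` A \<inter> A = {}"
  shows "\<exists>\<pi>. bij \<pi> \<and> (\<forall>x \<in> A. \<pi> x = f x)"
proof -
  define \<pi> where "\<pi> x = (if x \<in> A then f x else if x \<in> f ` A then the_inv_into A f x else x)" for x
  have "\<pi> (\<pi> x) = x" for x
    using disj inj unfolding \<pi>_def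
    by (auto simp: the_inv_into_f_f f_the_inv_into_f the_inv_into_into)
  then have "bij \<pi>" by (intro o_bij[of \<pi>]) auto
  then show ?thesis unfolding \<pi>_def by auto
qed

lemma fresh_permutation:
  assumes "infinite (UNIV :: 'a set)" "finite A" "finite B"
  shows "\<exists>\<pi> :: 'a \<Rightarrow> 'a. bij \<pi> \<and> \<pi> ` A \<inter> B = {}"
proof -
  obtain F where F: "finite F" "card F = card A" "F \<subseteq> UNIV - (A \<union> B)"
    using infinite_arbitrarily_large[of "UNIV - (A \<union> B)" "card A"] assms by auto
  then obtain h where "bij_betw h A F"
    using finite_same_card_bij[OF assms(2) F(1)] by metis
  then have "inj_on h A" "h ` A = F" by (auto simp: bij_betw_def)
  moreover obtain \<pi> where "bij \<pi>" "\<forall>x \<in> A. \<pi> x = h x"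
    using inj_on_extend_to_bij[of h A] calculation F(3) by blast
  ultimately show ?thesis
    using F(3) by (intro exI[of _ \<pi>]) (auto simp: image_iff)
qed

lemma fresh_permutations:
  assumes "infinite (UNIV :: 'a set)" "finite A" "finite B"
  shows "\<exists>\<Pi> :: 'i \<Rightarrow> 'a \<Rightarrow> 'a. (\<forall>i. bij (\<Pi> i)) \<and> (\<forall>i \<in> set is. \<Pi> i ` A \<inter> B = {}) \<and>
    (\<forall>i \<in> set is. \<forall>j \<in> set is. i \<noteq> j \<longrightarrow> \<Pi> i ` A \<inter> \<Pi> j ` A = {})"
  using assms(3)
proof (induction "is" arbitrary: B)
  case Nil
  show ?case by (intro exI[of _ "\<lambda>_. id"]) (simp add: bij_id[unfolded id_def])
next
  case (Cons i "is")
  obtain \<pi> where \<pi>: "bij \<pi>" "\<pi> ` A \<inter> B = {}"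
    using fresh_permutation[OF assms(1,2) Cons.prems] by blast
  obtain \<Pi> where \<Pi>: "\<forall>i. bij (\<Pi> i)" "\<forall>j \<in> set is. \<Pi> j ` A \<inter> (B \<union> \<pi> ` A) = {}"
    "\<forall>j \<in> set is. \<forall>k \<in> set is. j \<noteq> k \<longrightarrow> \<Pi> j ` A \<inter> \<Pi> k ` A = {}"
    using Cons.IH[of "B \<union> \<pi> ` A"] Cons.prems assms(2) by auto
  have \<Pi>_fresh: "\<Pi> j ` A \<inter> B = {}" "\<Pi> j ` A \<inter> \<pi> ` A = {}" if "j \<in> set is" for j
    using \<Pi>(2) that by blast+
  show ?case
  proof (intro exI[of _ "\<Pi>(i := \<pi>)"] conjI ballI impI allI)
    show "bij ((\<Pi>(i := \<pi>)) j)" for j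
      using \<pi>(1) \<Pi>(1) by simp
    show "(\<Pi>(i := \<pi>)) j ` A \<inter> B = {}" if "j \<in> set (i # is)" for j
      using that \<pi>(2) \<Pi>_fresh by (cases "j = i") auto
    show "(\<Pi>(i := \<pi>)) j ` A \<inter> (\<Pi>(i := \<pi>)) k ` A = {}"
      if "j \<in> set (i # is)" "k \<in> set (i # is)" "j \<noteq> k" for j k
      using that \<Pi>(3) \<Pi>_fresh by (cases "j = i"; cases "k = i") (auto simp: Int_commute)
  qed
qed

lemma rename_rules_apart:
  fixes lr :: "pos \<Rightarrow> ('f, 'v) rule"
  assumes "infinite (UNIV :: 'v set)" "finite V"
  obtains lrs \<nu> where "\<And>p. p \<in> set Q \<Longrightarrow> is_variant (lrs p) (lr p)"
    and "\<And>p. p \<in> set Q \<Longrightarrow> vars_rule (lrs p) \<inter> V = {}"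
    and "\<And>p q. p \<in> set Q \<Longrightarrow> q \<in> set Q \<Longrightarrow> p \<noteq> q \<Longrightarrow> vars_rule (lrs p) \<inter> vars_rule (lrs q) = {}"
    and "\<And>p. p \<in> set Q \<Longrightarrow> fst (lrs p) \<cdot> \<nu> = fst (lr p) \<cdot> \<mu> p \<and> snd (lrs p) \<cdot> \<nu> = snd (lr p) \<cdot> \<mu> p"
proof -
  define W where "W = (\<Union>p \<in> set Q. vars_rule (lr p))"
  have "finite W" unfolding W_def vars_rule_def by auto
  obtain \<Pi> where \<Pi>: "\<forall>p. bij (\<Pi> p)" "\<forall>p \<in> set Q. \<Pi> p ` W \<inter> V = {}"
    "\<forall>p \<in> set Q. \<forall>q \<in> set Q. p \<noteq> q \<longrightarrow> \<Pi> p ` W \<inter> \<Pi> q ` W = {}"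
    using fresh_permutations[OF assms(1) \<open>finite W\<close> assms(2), of Q] by (elim exE conjE) blast
  define lrs where "lrs p = (fst (lr p) \<cdot> (Var \<circ> \<Pi> p), snd (lr p) \<cdot> (Var \<circ> \<Pi> p))" for p
  have vars_lrs: "vars_rule (lrs p) = \<Pi> p ` vars_rule (lr p)" for p
    unfolding lrs_def vars_rule_def by (auto simp: vars_rename)
  have W: "vars_rule (lr p) \<subseteq> W" if "p \<in> set Q" for p
    using that unfolding W_def by auto
  have disj: "\<forall>p \<in> set Q. \<forall>q \<in> set Q. p \<noteq> q \<longrightarrow> vars_rule (lrs p) \<inter> vars_rule (lrs q) = {}"
    using \<Pi>(3) W unfolding vars_lrs by blast
  then obtain \<nu> where \<nu>: "\<And>p x. p \<in> set Q \<Longrightarrow> x \<in> vars_rule (lrs p) \<Longrightarrow> \<nu> x = \<mu> p (inv (\<Pi> p) x)"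
    by (rule merge_on_disjoint_family[where f = "\<lambda>p x. \<mu> p (inv (\<Pi> p) x)" and g = Var]) blast
  have "u \<cdot> (Var \<circ> \<Pi> p) \<cdot> \<nu> = u \<cdot> \<mu> p" if "p \<in> set Q" "vars u \<subseteq> vars_rule (lr p)" for u p
    unfolding subst_rename
  proof (rule subst_cong)
    fix x
    assume "x \<in> vars u"
    then show "(\<nu> \<circ> \<Pi> p) x = \<mu> p x"
      using that \<nu>[of p "\<Pi> p x"] \<Pi>(1) by (auto simp: vars_lrs bij_is_inj)
  qed
  then have "fst (lrs p) \<cdot> \<nu> = fst (lr p) \<cdot> \<mu> p \<and> snd (lrs p) \<cdot> \<nu> = snd (lr p) \<cdot> \<mu> p"
    if "p \<in> set Q" for p
    using that unfolding lrs_def vars_rule_def by auto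
  moreover have "is_variant (lrs p) (lr p)" for p
    unfolding is_variant_def lrs_def using \<Pi>(1) by auto
  moreover have "vars_rule (lrs p) \<inter> V = {}" if "p \<in> set Q" for p
    using \<Pi>(2) that W[OF that] unfolding vars_lrs by blast
  ultimately show ?thesis
    using that disj by blast
qed

lemma variant_instance:
  assumes "is_variant lr' (l, r)" "vars r \<subseteq> vars l" "fst lr' \<cdot> \<tau> = l \<cdot> \<sigma>"
  shows "snd lr' \<cdot> \<tau> = r \<cdot> \<sigma>"
proof -
  obtain \<pi> where \<pi>: "fst lr' = l \<cdot> (Var \<circ> \<pi>)" "snd lr' = r \<cdot> (Var \<circ> \<pi>)"
    using assms(1) unfolding is_variant_def by auto
  have "(\<tau> \<circ> \<pi>) x = \<sigma> x" if "x \<in> vars l" for x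
    using assms(3) that unfolding \<pi>(1) subst_rename by (rule subst_eq_imp_eq_on_vars)
  then show ?thesis
    unfolding \<pi>(2) subst_rename using assms(2) by (intro subst_cong) auto
qed

lemma is_variant_linear: "is_variant lr' lr \<Longrightarrow> linear_term (fst lr) \<Longrightarrow> linear_term (fst lr')"
  unfolding is_variant_def by (auto simp: linear_term_rename bij_is_inj)

section \<open>Parallel steps from instances of linear terms\<close>

text \<open>The step \<open>l \<cdot> \<sigma> \<Rightarrow>\<^sub>B t\<close> consists of rule steps at the function positions \<open>Q\<close> of \<open>l\<close>,
  with rules \<open>lr q\<close> and matchers \<open>\<mu> q\<close>, and of a step \<open>\<sigma> \<Rightarrow>\<^sub>B \<sigma>'\<close> inside the substitution.\<close>
definition par_split ::
  "('f, 'v) trs \<Rightarrow> ('f, 'v) term \<Rightarrow> ('v \<Rightarrow> ('f, 'v) term) \<Rightarrow> ('f, 'v) term \<Rightarrow> pos list \<Rightarrow>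
   (pos \<Rightarrow> ('f, 'v) rule) \<Rightarrow> (pos \<Rightarrow> 'v \<Rightarrow> ('f, 'v) term) \<Rightarrow> ('v \<Rightarrow> ('f, 'v) term) \<Rightarrow> bool" where
  "par_split B l \<sigma> t Q lr \<mu> \<sigma>' \<longleftrightarrow> distinct Q \<and> set Q \<subseteq> fun_poss l \<and> pairwise_parallel Q \<and>
     (\<forall>q \<in> set Q. lr q \<in> B \<and> (l |_ q) \<cdot> \<sigma> = fst (lr q) \<cdot> \<mu> q) \<and>
     (\<forall>x. par B (\<sigma> x) (\<sigma>' x)) \<and> (\<forall>q \<in> set Q. \<forall>x \<in> vars (l |_ q). \<sigma>' x = \<sigma> x) \<and>
     t = replace_all (l \<cdot> \<sigma>') (map (\<lambda>q. (q, snd (lr q) \<cdot> \<mu> q)) Q)"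

lemma par_split_args:
  assumes lin: "linear_term (Fun f ls)" and len: "length ts = length ls"
    and split: "\<And>i. i < length ls \<Longrightarrow> par_split B (ls ! i) \<sigma> (ts ! i) (QQ i) (LR i) (MU i) (SS i)"
  shows "\<exists>\<sigma>'. par_split B (Fun f ls) \<sigma> (Fun f ts) (arg_poss QQ (length ls))
    (\<lambda>p. LR (hd p) (tl p)) (\<lambda>p. MU (hd p) (tl p)) \<sigma>'"
proof -
  let ?n = "length ls"
  let ?Q = "arg_poss QQ ?n"
  have QQ: "distinct (QQ i)" "set (QQ i) \<subseteq> fun_poss (ls ! i)" "pairwise_parallel (QQ i)"
    and LR: "\<forall>q \<in> set (QQ i). LR i q \<in> B \<and> (ls ! i |_ q) \<cdot> \<sigma> = fst (LR i q) \<cdot> MU i q"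
    and SS: "\<forall>x. par B (\<sigma> x) (SS i x)" "\<forall>q \<in> set (QQ i). \<forall>x \<in> vars (ls ! i |_ q). SS i x = \<sigma> x"
    and ts: "ts ! i = replace_all (ls ! i \<cdot> SS i) (map (\<lambda>q. (q, snd (LR i q) \<cdot> MU i q)) (QQ i))"
    if "i < ?n" for i
    using split[OF that] unfolding par_split_def by blast+
  have "\<forall>i \<in> {..<?n}. \<forall>j \<in> {..<?n}. i \<noteq> j \<longrightarrow> vars (ls ! i) \<inter> vars (ls ! j) = {}"
    using lin by simp
  then obtain \<sigma>' where \<sigma>'_arg: "\<And>i x. i \<in> {..<?n} \<Longrightarrow> x \<in> vars (ls ! i) \<Longrightarrow> \<sigma>' x = SS i x"
    and \<sigma>'_out: "\<And>x. x \<notin> (\<Union>i \<in> {..<?n}. vars (ls ! i)) \<Longrightarrow> \<sigma>' x = \<sigma> x"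
    by (rule merge_on_disjoint_family[where f = SS and g = \<sigma>]) blast
  have arg_\<sigma>': "ls ! i \<cdot> \<sigma>' = ls ! i \<cdot> SS i" if "i < ?n" for i
    using that \<sigma>'_arg by (intro subst_cong) auto
  have "replace_all (Fun f ls \<cdot> \<sigma>') (map (\<lambda>p. (p, snd (LR (hd p) (tl p)) \<cdot> MU (hd p) (tl p))) ?Q) =
    Fun f (map (\<lambda>i. replace_all (ls ! i \<cdot> \<sigma>') (map (\<lambda>q. (q, snd (LR i q) \<cdot> MU i q)) (QQ i))) [0..<?n])"
    using replace_all_Fun_arg_poss[of f "map (\<lambda>t. t \<cdot> \<sigma>') ls"] by simp
  also have "\<dots> = Fun f ts"
    using ts arg_\<sigma>' len by (auto intro!: nth_equalityI)
  finally have t: "Fun f ts = replace_all (Fun f ls \<cdot> \<sigma>')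
      (map (\<lambda>p. (p, snd (LR (hd p) (tl p)) \<cdot> MU (hd p) (tl p))) ?Q)" ..
  have Q_arg: "\<exists>i q. p = i # q \<and> i < ?n \<and> q \<in> set (QQ i)" if "p \<in> set ?Q" for p
    using that by (simp add: set_arg_poss)
  have \<sigma>'_par: "par B (\<sigma> x) (\<sigma>' x)" for x
  proof (cases "x \<in> (\<Union>i \<in> {..<?n}. vars (ls ! i))")
    case True
    then obtain i where "i < ?n" "x \<in> vars (ls ! i)" by blast
    then show ?thesis using SS(1) \<sigma>'_arg by simp
  qed (simp add: \<sigma>'_out par_refl)
  show ?thesis
    unfolding par_split_def
  proof (intro exI[of _ \<sigma>'] conjI ballI allI)
    show "distinct ?Q" "pairwise_parallel ?Q"
      using QQ fun_poss_imp_poss by (auto intro: distinct_arg_poss pairwise_parallel_arg_poss)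
    show "set ?Q \<subseteq> fun_poss (Fun f ls)"
      using Q_arg QQ(2) by fastforce
    show "LR (hd p) (tl p) \<in> B" "(Fun f ls |_ p) \<cdot> \<sigma> = fst (LR (hd p) (tl p)) \<cdot> MU (hd p) (tl p)"
      if "p \<in> set ?Q" for p
      using Q_arg[OF that] LR by auto
    show "\<sigma>' x = \<sigma> x" if p_Q: "p \<in> set ?Q" and x: "x \<in> vars (Fun f ls |_ p)" for p x
    proof -
      obtain i q where p: "p = i # q" and i: "i < ?n" and q: "q \<in> set (QQ i)"
        using Q_arg[OF p_Q] by blast
      have "q \<in> poss (ls ! i)"
        using QQ(2)[OF i] q fun_poss_imp_poss by blast
      then have "x \<in> vars (ls ! i)"
        using x vars_subt_at p i by auto
      then show ?thesis using x p i q \<sigma>'_arg SS(2) by auto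
    qed
  qed (use t \<sigma>'_par in auto)
qed

lemma par_split_linear_instance:
  assumes "linear_term l" and "par B (l \<cdot> \<sigma>) t"
  shows "\<exists>Q lr \<mu> \<sigma>'. par_split B l \<sigma> t Q lr \<mu> \<sigma>'"
  using assms
proof (induction l arbitrary: t)
  case (Var x)
  have "par_split B (Var x) \<sigma> t [] lr \<mu> (\<sigma>(x := t))" for lr \<mu>
    using Var.prems(2) by (auto simp: par_split_def par_refl pairwise_parallel_def)
  then show ?case by blast
next
  case (Fun f ls)
  from Fun.prems(2) show ?case
  proof (cases rule: par.cases)
    case (par_rule l' r' \<mu>)
    then have "par_split B (Fun f ls) \<sigma> t [[]] (\<lambda>_. (l', r')) (\<lambda>_. \<mu>) \<sigma>"
      by (auto simp: par_split_def par_refl pairwise_parallel_def)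
    then show ?thesis by blast
  next
    case (par_Fun ss ts)
    then have len: "length ts = length ls" and t: "t = Fun f ts"
      and args: "\<And>i. i < length ls \<Longrightarrow> par B (ls ! i \<cdot> \<sigma>) (ts ! i)"
      by auto
    have "\<exists>Q lr \<mu> \<sigma>'. par_split B (ls ! i) \<sigma> (ts ! i) Q lr \<mu> \<sigma>'" if "i < length ls" for i
      using Fun.IH[OF nth_mem[OF that]] Fun.prems(1) args[OF that] that by simp
    then obtain QQ LR MU SS
      where "\<And>i. i < length ls \<Longrightarrow> par_split B (ls ! i) \<sigma> (ts ! i) (QQ i) (LR i) (MU i) (SS i)"
      by metis
    from par_split_args[OF Fun.prems(1) len this] show ?thesis
      unfolding t by blast
  qed simp
qed

section \<open>Resolving parallel peaks\<close>

definition peak_resolved ::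
  "('f, 'v) trs \<Rightarrow> ('f, 'v) trs \<Rightarrow> ('f, 'v) trs \<Rightarrow> ('f, 'v) trs \<Rightarrow>
   ('f, 'v) term \<Rightarrow> ('f, 'v) term \<Rightarrow> ('f, 'v) term \<Rightarrow> bool" where
  "peak_resolved R C R1 R2 s t u \<longleftrightarrow>
     (\<exists>a b. par R2 t a \<and> (a, b) \<in> conv C \<and> par R1 u b) \<or>
     (\<exists>t' u'. par R1 t' t \<and> (s, t') \<in> rstep (PCPS R C) \<and> (s, u') \<in> rstep (PCPS R C) \<and>
        par R2 u' u \<and> (t', u') \<in> join R)"

lemma peak_resolved_sym:
  "peak_resolved R C R1 R2 s t u \<Longrightarrow> peak_resolved R C R2 R1 s u t"
  unfolding peak_resolved_def by (meson conv_sym join_sym)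

lemma peak_resolved_args:
  assumes len: "length ts = length ss" "length us = length ss"
    and steps: "\<And>i. i < length ss \<Longrightarrow> par R1 (ss ! i) (ts ! i) \<and> par R2 (ss ! i) (us ! i)"
    and resolved: "\<And>i. i < length ss \<Longrightarrow> peak_resolved R C R1 R2 (ss ! i) (ts ! i) (us ! i)"
  shows "peak_resolved R C R1 R2 (Fun f ss) (Fun f ts) (Fun f us)"
proof (cases "\<exists>i < length ss. \<exists>t' u'. par R1 t' (ts ! i) \<and> (ss ! i, t') \<in> rstep (PCPS R C) \<and>
    (ss ! i, u') \<in> rstep (PCPS R C) \<and> par R2 u' (us ! i) \<and> (t', u') \<in> join R")
  case True
  then obtain i t' u' where i: "i < length ss" and t': "par R1 t' (ts ! i)" "(ss ! i, t') \<in> rstep (PCPS R C)"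
    and u': "(ss ! i, u') \<in> rstep (PCPS R C)" "par R2 u' (us ! i)" and "(t', u') \<in> join R"
    by blast
  have "par R1 (Fun f (ss[i := t'])) (Fun f ts)" "par R2 (Fun f (ss[i := u'])) (Fun f us)"
    using i t'(1) u'(2) steps len by (auto intro!: par_Fun simp: nth_list_update)
  moreover have "(Fun f ss, Fun f (ss[i := t'])) \<in> rstep (PCPS R C)"
    "(Fun f ss, Fun f (ss[i := u'])) \<in> rstep (PCPS R C)"
    using rstep_arg[OF t'(2) i, of f] rstep_arg[OF u'(1) i, of f] by simp_all
  moreover have "(Fun f (ss[i := t']), Fun f (ss[i := u'])) \<in> join R"
    using join_arg[OF \<open>(t', u') \<in> join R\<close> i] .
  ultimately show ?thesis unfolding peak_resolved_def by blast
next
  case False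
  then have "\<exists>a b. par R2 (ts ! i) a \<and> (a, b) \<in> conv C \<and> par R1 (us ! i) b" if "i < length ss" for i
    using resolved[OF that] that unfolding peak_resolved_def by blast
  then obtain A B where AB: "\<And>i. i < length ss \<Longrightarrow>
      par R2 (ts ! i) (A i) \<and> (A i, B i) \<in> conv C \<and> par R1 (us ! i) (B i)"
    by metis
  have "par R2 (Fun f ts) (Fun f (map A [0..<length ss]))"
    "par R1 (Fun f us) (Fun f (map B [0..<length ss]))"
    using AB len by (auto intro!: par_Fun)
  moreover have "(Fun f (map A [0..<length ss]), Fun f (map B [0..<length ss])) \<in> conv C"
    using AB by (auto intro!: conv_args)
  ultimately show ?thesis unfolding peak_resolved_def by blast
qed

lemma par_crit_peakI:
  assumes "(l, r) \<in> R" "Q \<noteq> []" "distinct Q" "set Q \<subseteq> fun_poss l" "pairwise_parallel Q"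
    and "\<forall>p \<in> set Q. variant_of (lrs p) R"
    and "\<forall>p \<in> set Q. vars_rule (lrs p) \<inter> vars_rule (l, r) = {}"
    and "\<forall>p \<in> set Q. \<forall>q \<in> set Q. p \<noteq> q \<longrightarrow> vars_rule (lrs p) \<inter> vars_rule (lrs q) = {}"
    and "is_mgu \<theta> {(fst (lrs p), l |_ p) | p. p \<in> set Q}"
    and "\<not> (Q = [[]] \<and> is_variant (lrs []) (l, r))"
  shows "par_crit_peak R R (l \<cdot> \<theta>) (replace_all (l \<cdot> \<theta>) (map (\<lambda>p. (p, snd (lrs p) \<cdot> \<theta>)) Q)) (r \<cdot> \<theta>)"
proof -
  have "variant_of (l, r) R"
    unfolding variant_of_def is_variant_def using assms(1)
    by (intro bexI[of _ "(l, r)"] exI[of _ id]) auto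
  with assms(2-) show ?thesis
    unfolding par_crit_peak_def
    by (intro exI[of _ l] exI[of _ r] exI[of _ Q] exI[of _ lrs] exI[of _ \<theta>] conjI) simp_all
qed

context
  fixes R C :: "('f, 'v) trs"
  assumes infinite_vars: "infinite (UNIV :: 'v set)"
    and wf: "wf_trs R" and left_linear: "left_linear R"
    and pcp_joinable: "\<forall>s t u. par_crit_peak R R s t u \<longrightarrow> (t, u) \<in> join R"
begin

lemma critical_peak_instance_resolved:
  assumes pcp: "par_crit_peak R R s t u"
    and "par R1 (t \<cdot> \<tau>) t'" "t \<cdot> \<tau>' = t'" "par R1 (u \<cdot> \<tau>) (u \<cdot> \<tau>')"
  shows "peak_resolved R C R1 R2 (s \<cdot> \<tau>) t' (u \<cdot> \<tau>)"
proof (cases "(t, u) \<in> conv C")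
  case True
  then have "(t', u \<cdot> \<tau>') \<in> conv C"
    using conv_subst[OF True, of \<tau>'] assms(3) by simp
  then show ?thesis
    using assms(4) unfolding peak_resolved_def by (blast intro: par_refl)
next
  case False
  then have "(s, t) \<in> PCPS R C" "(s, u) \<in> PCPS R C"
    using pcp unfolding PCPS_def by blast+
  then have "(s \<cdot> \<tau>, t \<cdot> \<tau>) \<in> rstep (PCPS R C)" "(s \<cdot> \<tau>, u \<cdot> \<tau>) \<in> rstep (PCPS R C)"
    by (simp_all add: rstep_rule)
  moreover have "(t \<cdot> \<tau>, u \<cdot> \<tau>) \<in> join R"
    using pcp_joinable pcp by (blast intro: join_subst)
  ultimately show ?thesis
    using assms(2) unfolding peak_resolved_def by (blast intro: par_refl)
qed

lemma parallel_overlap_cases: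
  assumes "(l, r) \<in> R" and Q: "Q \<noteq> []" "distinct Q" "set Q \<subseteq> fun_poss l" "pairwise_parallel Q"
    and lr: "\<forall>q \<in> set Q. lr q \<in> R \<and> (l |_ q) \<cdot> \<sigma> = fst (lr q) \<cdot> \<mu> q"
  obtains (variant) "Q = [[]]" "snd (lr []) \<cdot> \<mu> [] = r \<cdot> \<sigma>"
  | (critical) \<theta> t0 \<nu> N where "par_crit_peak R R (l \<cdot> \<theta>) t0 (r \<cdot> \<theta>)"
    and "\<And>\<rho>. (\<And>q x. q \<in> set Q \<Longrightarrow> x \<in> vars (l |_ q) \<Longrightarrow> \<rho> x = \<sigma> x) \<Longrightarrow>
      l \<cdot> \<theta> \<cdot> override_on \<rho> \<nu> N = l \<cdot> \<rho> \<and> r \<cdot> \<theta> \<cdot> override_on \<rho> \<nu> N = r \<cdot> \<rho> \<and>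
      t0 \<cdot> override_on \<rho> \<nu> N = replace_all (l \<cdot> \<rho>) (map (\<lambda>q. (q, snd (lr q) \<cdot> \<mu> q)) Q)"
proof -
  have lin: "linear_term l" and vars_r: "vars r \<subseteq> vars l"
    using \<open>(l, r) \<in> R\<close> wf left_linear unfolding wf_trs_def left_linear_def by auto
  have Q_poss: "set Q \<subseteq> poss l"
    using Q(3) fun_poss_imp_poss by blast
  define V where "V = vars l \<union> vars r"
  obtain lrs \<nu> where variant: "\<And>p. p \<in> set Q \<Longrightarrow> is_variant (lrs p) (lr p)"
    and fresh: "\<And>p. p \<in> set Q \<Longrightarrow> vars_rule (lrs p) \<inter> V = {}"
    and apart: "\<And>p q. p \<in> set Q \<Longrightarrow> q \<in> set Q \<Longrightarrow> p \<noteq> q \<Longrightarrow> vars_rule (lrs p) \<inter> vars_rule (lrs q) = {}"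
    and \<nu>: "\<And>p. p \<in> set Q \<Longrightarrow> fst (lrs p) \<cdot> \<nu> = fst (lr p) \<cdot> \<mu> p \<and> snd (lrs p) \<cdot> \<nu> = snd (lr p) \<cdot> \<mu> p"
    by (rule rename_rules_apart[OF infinite_vars, of V Q lr \<mu>]) (auto simp: V_def)
  define N where "N = (\<Union>p \<in> set Q. vars_rule (lrs p))"
  have override_V: "u \<cdot> override_on \<rho> \<nu> N = u \<cdot> \<rho>" if "vars u \<subseteq> V" for u \<rho>
    using that fresh by (intro subst_override_on_disjoint) (auto simp: N_def)
  have override_lrs: "snd (lrs p) \<cdot> override_on \<rho> \<nu> N = snd (lr p) \<cdot> \<mu> p" if "p \<in> set Q" for p \<rho>
  proof -
    have "vars (snd (lrs p)) \<subseteq> N"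
      using that by (auto simp: N_def vars_rule_def)
    then show ?thesis
      using \<nu>[OF that] by (simp add: subst_override_on_subset)
  qed
  have "linear_term (fst (lrs p))" if "p \<in> set Q" for p
    using that variant lr left_linear unfolding left_linear_def by (fastforce intro: is_variant_linear)
  moreover have "fst (lrs p) \<cdot> \<nu> = (l |_ p) \<cdot> \<sigma>" if "p \<in> set Q" for p
    using \<nu> lr that by simp
  ultimately obtain \<theta> where mgu: "is_mgu \<theta> {(fst (lrs p), l |_ p) | p. p \<in> set Q}"
    and absorb: "\<And>\<rho> u. (\<And>q x. q \<in> set Q \<Longrightarrow> x \<in> vars (l |_ q) \<Longrightarrow> \<rho> x = \<sigma> x) \<Longrightarrow>
      u \<cdot> \<theta> \<cdot> override_on \<rho> \<nu> N = u \<cdot> override_on \<rho> \<nu> N"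
    using renamed_overlap_mgu[OF lin Q(2) Q_poss Q(4), of lrs \<nu> \<sigma>] fresh apart
    unfolding N_def V_def by blast
  define t0 where "t0 = replace_all (l \<cdot> \<theta>) (map (\<lambda>p. (p, snd (lrs p) \<cdot> \<theta>)) Q)"
  show ?thesis
  proof (cases "Q = [[]] \<and> is_variant (lrs []) (l, r)")
    case True
    then have "fst (lrs []) \<cdot> \<nu> = l \<cdot> \<sigma>"
      using \<nu> lr by simp
    then have "snd (lrs []) \<cdot> \<nu> = r \<cdot> \<sigma>"
      using True vars_r by (blast intro: variant_instance)
    then show ?thesis
      using True \<nu> variant by (intro that(1)) simp_all
  next
    case False
    have "par_crit_peak R R (l \<cdot> \<theta>) t0 (r \<cdot> \<theta>)"
      unfolding t0_def
    proof (rule par_crit_peakI[OF \<open>(l, r) \<in> R\<close> Q _ _ _ mgu False])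
      show "\<forall>p \<in> set Q. variant_of (lrs p) R"
        using variant lr unfolding variant_of_def by blast
    qed (use fresh apart in \<open>auto simp: V_def\<close>)
    moreover have "t0 \<cdot> override_on \<rho> \<nu> N = replace_all (l \<cdot> \<rho>) (map (\<lambda>q. (q, snd (lr q) \<cdot> \<mu> q)) Q)"
      if agree: "\<And>q x. q \<in> set Q \<Longrightarrow> x \<in> vars (l |_ q) \<Longrightarrow> \<rho> x = \<sigma> x" for \<rho>
    proof -
      have "snd (lrs p) \<cdot> \<theta> \<cdot> override_on \<rho> \<nu> N = snd (lr p) \<cdot> \<mu> p" if "p \<in> set Q" for p
        using absorb[OF agree, where u = "snd (lrs p)"] override_lrs[OF that] by simp
      moreover have "l \<cdot> \<theta> \<cdot> override_on \<rho> \<nu> N = l \<cdot> \<rho>"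
        using absorb[OF agree, where u = l] override_V by (simp add: V_def)
      ultimately show ?thesis
        unfolding t0_def using Q(2,4) Q_poss
        by (simp add: replace_all_subst poss_subst subset_iff cong: map_cong)
    qed
    ultimately show ?thesis
      using absorb override_V by (intro that(2)) (auto simp: V_def)
  qed
qed

lemma root_peak_resolved:
  assumes R1: "R1 \<subseteq> R" and lr_R2: "(l, r) \<in> R2" "R2 \<subseteq> R" and st: "par R1 (l \<cdot> \<sigma>) t"
  shows "peak_resolved R C R1 R2 (l \<cdot> \<sigma>) t (r \<cdot> \<sigma>)"
proof -
  have "(l, r) \<in> R" using lr_R2 by blast
  then have lin: "linear_term l"
    using left_linear unfolding left_linear_def by auto
  obtain Q lr \<mu> \<sigma>' where Q: "distinct Q" "set Q \<subseteq> fun_poss l" "pairwise_parallel Q"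
    and lr: "\<forall>q \<in> set Q. lr q \<in> R1 \<and> (l |_ q) \<cdot> \<sigma> = fst (lr q) \<cdot> \<mu> q"
    and \<sigma>': "\<forall>x. par R1 (\<sigma> x) (\<sigma>' x)" "\<forall>q \<in> set Q. \<forall>x \<in> vars (l |_ q). \<sigma>' x = \<sigma> x"
    and t: "t = replace_all (l \<cdot> \<sigma>') (map (\<lambda>q. (q, snd (lr q) \<cdot> \<mu> q)) Q)"
    using par_split_linear_instance[OF lin st] unfolding par_split_def by blast
  show ?thesis
  proof (cases "Q = []")
    case True
    have "par R1 (r \<cdot> \<sigma>) (r \<cdot> \<sigma>')"
      using \<sigma>'(1) by (intro par_subst) auto
    moreover have "par R2 t (r \<cdot> \<sigma>')"
      using t True par_rule[OF lr_R2(1)] by simp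
    ultimately show ?thesis
      unfolding peak_resolved_def by (blast intro: conv_refl)
  next
    case False
    have lr_R: "\<forall>q \<in> set Q. lr q \<in> R \<and> (l |_ q) \<cdot> \<sigma> = fst (lr q) \<cdot> \<mu> q"
      using lr R1 by blast
    show ?thesis
    proof (cases rule: parallel_overlap_cases[OF \<open>(l, r) \<in> R\<close> False Q lr_R, case_names variant critical])
      case variant
      then have "t = r \<cdot> \<sigma>"
        using t by simp
      then show ?thesis
        unfolding peak_resolved_def by (blast intro: par_refl conv_refl)
    next
      case (critical \<theta> t0 \<nu> N)
      \<comment> \<open>\<open>\<sigma>1\<close> performs the steps of \<open>\<sigma> \<Rightarrow> \<sigma>'\<close> on the variables of \<open>l\<close> only, so it still agrees
        with \<open>\<sigma>\<close> on the overlapped subterms\<close>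
      define \<sigma>1 where "\<sigma>1 x = (if x \<in> vars l then \<sigma>' x else \<sigma> x)" for x
      have "l \<cdot> \<sigma>1 = l \<cdot> \<sigma>'"
        by (intro subst_cong) (simp add: \<sigma>1_def)
      then have t0: "t0 \<cdot> override_on \<sigma>1 \<nu> N = t"
        using t critical(2)[of \<sigma>1] \<sigma>'(2) by (simp add: \<sigma>1_def)
      have inst: "l \<cdot> \<theta> \<cdot> override_on \<sigma> \<nu> N = l \<cdot> \<sigma>" "r \<cdot> \<theta> \<cdot> override_on \<sigma> \<nu> N = r \<cdot> \<sigma>"
        using critical(2)[of \<sigma>] by simp_all
      have par_override: "par R1 (u \<cdot> override_on \<sigma> \<nu> N) (u \<cdot> override_on \<sigma>1 \<nu> N)" for u
        using \<sigma>'(1) by (intro par_subst) (auto simp: override_on_def \<sigma>1_def par_refl)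
      from critical_peak_instance_resolved[OF critical(1) par_override[of t0, unfolded t0] t0 par_override]
      show ?thesis
        unfolding inst .
    qed
  qed
qed

lemma par_peak_resolved:
  assumes "R1 \<subseteq> R" "R2 \<subseteq> R"
  shows "par R1 s t \<Longrightarrow> par R2 s u \<Longrightarrow> peak_resolved R C R1 R2 s t u"
proof (induction s arbitrary: t u)
  case (Var x)
  from Var.prems(1) show ?case
  proof cases
    case par_Var
    from Var.prems(2) show ?thesis
    proof cases
      case par_Var
      with \<open>t = Var x\<close> show ?thesis
        unfolding peak_resolved_def by (blast intro: par_refl conv_refl)
    next
      case (par_rule l r \<mu>)
      with Var.prems(1) show ?thesis
        using root_peak_resolved[OF assms(1)] assms(2) by simp
    qed
  next
    case (par_rule l r \<mu>)
    with Var.prems(2) show ?thesis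
      using root_peak_resolved[OF assms(2) _ assms(1)] peak_resolved_sym by metis
  qed
next
  case (Fun f ss)
  from Fun.prems(1) show ?case
  proof cases
    case (par_Fun ts)
    note t = this
    from Fun.prems(2) show ?thesis
    proof cases
      case (par_Fun us)
      have steps: "par R1 (ss ! i) (ts ! i) \<and> par R2 (ss ! i) (us ! i)" if "i < length ss" for i
        using t par_Fun that by simp
      have "length ts = length ss" "length us = length ss"
        using t par_Fun by simp_all
      then show ?thesis
        unfolding \<open>t = Fun f ts\<close> \<open>u = Fun f us\<close>
        by (rule peak_resolved_args) (use steps Fun.IH[OF nth_mem] in blast)+
    next
      case (par_rule l r \<mu>)
      with Fun.prems(1) show ?thesis
        using root_peak_resolved[OF assms(1)] assms(2) by simp
    qed
  next
    case (par_rule l r \<mu>)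
    with Fun.prems(2) show ?thesis
      using root_peak_resolved[OF assms(2) _ assms(1)] peak_resolved_sym by metis
  qed
qed

end

theorem lemma10:
  fixes R R1 R2 C P :: "('f, 'v) trs"
  assumes "infinite (UNIV :: 'v set)"
    and "wf_trs R" and "left_linear R"
    and "R1 \<subseteq> R" and "R2 \<subseteq> R" and "C \<subseteq> R"
    and "P = PCPS R C"
    and "\<forall>s t u. par_crit_peak R R s t u \<longrightarrow> (t, u) \<in> join R"
    and "(s, t) \<in> par_step R1" and "(s, u) \<in> par_step R2"
  shows "(t, u) \<in> par_step R2 O conv C O (par_step R1)\<inverse> \<or>
         (\<exists>t' u'. (t', t) \<in> par_step R1 \<and> (s, t') \<in> rstep P \<and> (s, u') \<in> rstep P \<and>
                  (u', u) \<in> par_step R2 \<and> (t', u') \<in> join R)"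
proof -
  have "peak_resolved R C R1 R2 s t u"
    using par_peak_resolved[OF assms(1-3,8) assms(4,5)] assms(9,10) by (simp add: par_step_iff_par)
  then show ?thesis
    unfolding assms(7) peak_resolved_def par_step_iff_par[symmetric] by blast
qed

end
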